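(* Suppose the queries are chosen by GP-TS-SDF, i.e., $x_t\in\arg\max_{x\in\mathcal{Q}}f_t(x)$ where $f_t\sim\mathcal{GP}(\mu_{t-1}(\cdot),\nu_t^2\sigma^2_{t-1}(\cdot))$ given $\mathcal{F}_{t-1}$, and let $r_t=f(x^\star)-f(x_t)$. For any filtration $\mathcal{F}_{t-1}$, conditioned on the event $E^f(t)$, $$\mathbb{E}[r_t\mid\mathcal{F}_{t-1}]\le\frac{11c_t}{\rho_mp}\mathbb{E}[\sigma_{t-1}(x_t)\mid\mathcal{F}_{t-1}]+\frac{2\mathcal{B}_f}{t^2},\qquad p=\frac{1}{4e\sqrt{\pi}}.$$
   Context: Setting. Let $\mathcal{Q}\subset\mathbb{R}^n$ be finite, $k$ a positive semidefinite kernel on $\mathcal{Q}$ with $k\le1$, and $f$ in the RKHS of $k$ with $\|f\|_k\le\mathcal{B}_f$; $x^\star\in\arg\max_{x\in\mathcal{Q}}f(x)$. Queries $x_1,x_2,\ldots$ are selected sequentially; feedback $y_t=f(x_t)+\epsilon_t$ with $R$-sub-Gaussian $\epsilon_t$ and $|y_t|\le\mathcal{B}_y$, observed after a random delay $d_t\in\{0,1,\ldots\}$ drawn from $\mathcal{D}$. For an integer $m\ge1$, $\rho_m=\mathbb{P}(d_s\le m)$, censored feedback $\tilde y_{s,t}=y_s\mathbb{1}\{d_s\le\min(m,t-s)\}$. With $\lambda>0$: $\mu_{t-1}(x)=\mathbf{k}_{t-1}(x)^\top(\mathbf{K}_{t-1}+\lambda I)^{-1}\tilde{\mathbf{y}}_{t-1}$,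 $\sigma^2_{t-1}(x,x')=k(x,x')-\mathbf{k}_{t-1}(x)^\top(\mathbf{K}_{t-1}+\lambda I)^{-1}\mathbf{k}_{t-1}(x')$, $\sigma^2_{t-1}(x)=\sigma^2_{t-1}(x,x)$, $\mathbf{k}_{t-1}(x)=(k(x,x_i))_{i\le t-1}$, $\mathbf{K}_{t-1}=(k(x_i,x_j))_{i,j\le t-1}$, $\tilde{\mathbf{y}}_{t-1}=(\tilde y_{s,t})_{s\le t-1}$. $\gamma_t=\max_A\frac12\log\det(I+\lambda^{-1}\mathbf{K}_A)$ over collections of $t$ points. For $\delta\in(0,1)$: $\beta_t=\mathcal{B}_f+(R+\mathcal{B}_y)\sqrt{2(\gamma_{t-1}+1+\log(4/\delta))}$, $\nu_t=\mathcal{B}_y\sum_{s=t-m}^{t-1}\sigma_{t-1}(x_s)+\beta_t$ (terms with $s<1$ omitted), $c_t=\nu_t(1+\sqrt{2\log(|\mathcal{Q}|t^2)})$. $\mathcal{F}_{t-1}$: history up to iteration $t-1$. $E^f(t)$: the event that $|\mu_{t-1}(x)-\rho_mf(x)|\le\nu_t\sigma_{t-1}(x)$ for all $x\in\mathcal{Q}$. *)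

theory Defs
  imports "HOL-Analysis.Analysis" "HOL-Probability.Probability"
begin

definition detN :: "nat \<Rightarrow> (nat \<Rightarrow> nat \<Rightarrow> real) \<Rightarrow> real" where
  "detN N A = (\<Sum>p | p permutes {..<N}. of_int (sign p) * (\<Prod>i<N. A i (p i)))"

definition psd_kernel_on :: "'a set \<Rightarrow> ('a \<Rightarrow> 'a \<Rightarrow> real) \<Rightarrow> bool" where
  "psd_kernel_on Q k \<longleftrightarrow> (\<forall>x\<in>Q. \<forall>y\<in>Q. k x y = k y x) \<and>
     (\<forall>a :: 'a \<Rightarrow> real. (\<Sum>x\<in>Q. \<Sum>y\<in>Q. a x * a y * k x y) \<ge> 0)"

(* f lies in the RKHS of k (on the finite set Q) with RKHS norm at most B:
   f = sum_y alpha_y k(.,y) on Q and ||f||_k^2 = alpha^T K alpha <= B^2 *)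
definition rkhs_norm_le :: "'a set \<Rightarrow> ('a \<Rightarrow> 'a \<Rightarrow> real) \<Rightarrow> ('a \<Rightarrow> real) \<Rightarrow> real \<Rightarrow> bool" where
  "rkhs_norm_le Q k f B \<longleftrightarrow> 0 \<le> B \<and> (\<exists>\<alpha> :: 'a \<Rightarrow> real.
      (\<forall>x\<in>Q. f x = (\<Sum>y\<in>Q. \<alpha> y * k x y)) \<and>
      (\<Sum>x\<in>Q. \<Sum>y\<in>Q. \<alpha> x * \<alpha> y * k x y) \<le> B\<^sup>2)"

(* (K_N + lambda I)^{-1} v, data indexed by {1..N}; K_N i j = k (xs i) (xs j) *)
definition reg_solve :: "('a \<Rightarrow> 'a \<Rightarrow> real) \<Rightarrow> real \<Rightarrow> (nat \<Rightarrow> 'a) \<Rightarrow> nat \<Rightarrow> (nat \<Rightarrow> real) \<Rightarrow> (nat \<Rightarrow> real)" where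
  "reg_solve k lam xs N v = (THE w. (\<forall>i\<in>{1..N}.
      (\<Sum>j=1..N. (k (xs i) (xs j) + (if i = j then lam else 0)) * w j) = v i)
      \<and> (\<forall>i. i \<notin> {1..N} \<longrightarrow> w i = 0))"

(* posterior mean mu_{t-1}: N = t-1 data points, censored observations yt *)
definition post_mean :: "('a \<Rightarrow> 'a \<Rightarrow> real) \<Rightarrow> real \<Rightarrow> (nat \<Rightarrow> 'a) \<Rightarrow> nat \<Rightarrow> (nat \<Rightarrow> real) \<Rightarrow> 'a \<Rightarrow> real" where
  "post_mean k lam xs N yt x = (\<Sum>i=1..N. k x (xs i) * reg_solve k lam xs N yt i)"

definition post_cov :: "('a \<Rightarrow> 'a \<Rightarrow> real) \<Rightarrow> real \<Rightarrow> (nat \<Rightarrow> 'a) \<Rightarrow> nat \<Rightarrow> 'a \<Rightarrow> 'a \<Rightarrow> real" where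
  "post_cov k lam xs N x x' =
     k x x' - (\<Sum>i=1..N. k x (xs i) * reg_solve k lam xs N (\<lambda>j. k (xs j) x') i)"

definition post_sd :: "('a \<Rightarrow> 'a \<Rightarrow> real) \<Rightarrow> real \<Rightarrow> (nat \<Rightarrow> 'a) \<Rightarrow> nat \<Rightarrow> 'a \<Rightarrow> real" where
  "post_sd k lam xs N x = sqrt (post_cov k lam xs N x x)"

definition info_gain :: "'a set \<Rightarrow> ('a \<Rightarrow> 'a \<Rightarrow> real) \<Rightarrow> real \<Rightarrow> nat \<Rightarrow> real" where
  "info_gain Q k lam N = Sup {(1/2) * ln (detN N (\<lambda>i j. (if i = j then 1 else 0) + k (A i) (A j) / lam))
                              | A :: nat \<Rightarrow> 'a. \<forall>i<N. A i \<in> Q}"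

definition censored :: "(nat \<Rightarrow> real) \<Rightarrow> (nat \<Rightarrow> nat) \<Rightarrow> nat \<Rightarrow> nat \<Rightarrow> nat \<Rightarrow> real" where
  "censored y d m t s = (if d s \<le> min m (t - s) then y s else 0)"

definition gaussian_rv :: "'w measure \<Rightarrow> ('w \<Rightarrow> real) \<Rightarrow> real \<Rightarrow> real \<Rightarrow> bool" where
  "gaussian_rv M Z mu v \<longleftrightarrow>
     (v = 0 \<and> Z \<in> borel_measurable M \<and> (AE w in M. Z w = mu)) \<or>
     (v > 0 \<and> distributed M lborel Z (normal_density mu (sqrt v)))"

definition gaussian_process_on :: "'w measure \<Rightarrow> 'a set \<Rightarrow> ('w \<Rightarrow> 'a \<Rightarrow> real) \<Rightarrow> ('a \<Rightarrow> real) \<Rightarrow> ('a \<Rightarrow> 'a \<Rightarrow> real) \<Rightarrow> bool" where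
  "gaussian_process_on M Q F m C \<longleftrightarrow> (\<forall>a :: 'a \<Rightarrow> real.
      gaussian_rv M (\<lambda>w. \<Sum>x\<in>Q. a x * F w x) (\<Sum>x\<in>Q. a x * m x) (\<Sum>x\<in>Q. \<Sum>y\<in>Q. a x * a y * C x y))"

end

theory Submission
  imports Defs
begin

(* Write s = \<nu> \<sigma>. On E^f the posterior mean is within s of \<rho> f, and Gaussian tails give:
   with probability at least 1 - 1/t^2 the sample deviates from the mean by at most a s
   everywhere on Q, where a = sqrt (2 ln (|Q| t^2)); and with probability at least 1/20 the
   sample at xstar exceeds \<mu>(xstar) + s(xstar). Call x saturated if \<rho> (f xstar - f x) > 2 (1 + a) s(x).
   A saturated point can beat xstar only if its sample deviates by more than (1 + 2a) s, which for
   t \<ge> 2 has probability at most 1/64, so the selected point is unsaturated with probability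
   at least 1/32. Comparing the selected point with the unsaturated point of least s bounds
   \<rho> times the regret by (1 + a) (3 s(xmin) + s(X)) off the deviation event, and
   s(xmin) \<le> 32 E[s(X)]. *)

lemma std_normal_density_shift_le:
  fixes a y :: real
  assumes "0 \<le> a" "0 \<le> a * y"
  shows "std_normal_density (a + y) \<le> exp (- a\<^sup>2 / 2) * std_normal_density y"
proof -
  have "exp (- (a + y)\<^sup>2 / 2) \<le> exp (- a\<^sup>2 / 2) * exp (- y\<^sup>2 / 2)"
    using assms by (simp add: power2_eq_square algebra_simps divide_simps flip: exp_add)
  then show ?thesis
    unfolding std_normal_density_def by (simp add: mult.left_commute divide_right_mono)
qed

lemma std_normal_density_two_sided_tail_le:
  fixes a x :: real
  assumes "0 \<le> a"
  shows "std_normal_density x * indicator {x. a < \<bar>x\<bar>} x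
    \<le> exp (- a\<^sup>2 / 2) * (std_normal_density (x - a) * indicator {a<..} x
                          + std_normal_density (x + a) * indicator {..< -a} x)"
proof -
  consider "a < x" | "x < - a" | "\<bar>x\<bar> \<le> a" by linarith
  then show ?thesis
  proof cases
    case 1
    then show ?thesis using std_normal_density_shift_le[of a "x - a"] assms by simp
  next
    case 2
    have "std_normal_density x = std_normal_density (a + (- x - a))"
      by (simp add: std_normal_density_def)
    also have "\<dots> \<le> exp (- a\<^sup>2 / 2) * std_normal_density (- x - a)"
      using std_normal_density_shift_le[of a "- x - a"] assms 2 by (simp add: mult_nonneg_nonpos)
    also have "std_normal_density (- x - a) = std_normal_density (x + a)"
      by (simp add: std_normal_density_def power2_eq_square algebra_simps)
    finally show ?thesis using 2 assms by simp
  qed (simp add: indicator_def)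
qed

lemma integral_std_normal_two_sided_tail_le:
  fixes a :: real
  assumes a: "0 \<le> a"
  shows "(\<integral>x. std_normal_density x * indicator {x. a < \<bar>x\<bar>} x \<partial>lborel) \<le> exp (- a\<^sup>2 / 2)"
proof -
  let ?\<phi> = std_normal_density
  have shifted_integrable: "integrable lborel (\<lambda>x. ?\<phi> (x + b) * indicator A x)"
    if "A \<in> sets lborel" for b and A :: "real set"
  proof (intro integrable_real_mult_indicator that)
    have "(\<lambda>x. ?\<phi> (x + b)) = normal_density (- b) 1"
      by (simp add: normal_density_def fun_eq_iff)
    then show "integrable lborel (\<lambda>x. ?\<phi> (x + b))" by simp
  qed
  have right: "(\<integral>x. ?\<phi> (x - a) * indicator {a<..} x \<partial>lborel)
      = (\<integral>y. ?\<phi> y * indicator {0<..} y \<partial>lborel)"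
    using lborel_integral_real_affine[of 1 "\<lambda>y. ?\<phi> y * indicator {0<..} y" "- a"]
    by (simp add: indicator_def)
  have left: "(\<integral>x. ?\<phi> (x + a) * indicator {..< -a} x \<partial>lborel)
      = (\<integral>y. ?\<phi> y * indicator {..<0} y \<partial>lborel)"
    using lborel_integral_real_affine[of 1 "\<lambda>y. ?\<phi> y * indicator {..<0} y" a]
    by (simp add: indicator_def add.commute flip: less_diff_eq)
  have "(\<integral>x. ?\<phi> x * indicator {x. a < \<bar>x\<bar>} x \<partial>lborel)
      \<le> (\<integral>x. exp (- a\<^sup>2 / 2) * (?\<phi> (x - a) * indicator {a<..} x
                                  + ?\<phi> (x + a) * indicator {..< -a} x) \<partial>lborel)"
    using shifted_integrable[of _ "- a"] shifted_integrable[of _ a]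
    by (intro integral_mono std_normal_density_two_sided_tail_le[OF a] integrable_real_mult_indicator)
       auto
  also have "\<dots> = exp (- a\<^sup>2 / 2) * ((\<integral>y. ?\<phi> y * indicator {0<..} y \<partial>lborel)
                                + (\<integral>y. ?\<phi> y * indicator {..<0} y \<partial>lborel))"
    using shifted_integrable[of _ "- a"] shifted_integrable[of _ a]
    by (simp add: Bochner_Integration.integral_add right left)
  also have "\<dots> \<le> exp (- a\<^sup>2 / 2) * (\<integral>y. ?\<phi> y \<partial>lborel)"
  proof -
    have "(\<integral>y. ?\<phi> y * indicator {0<..} y \<partial>lborel)
          + (\<integral>y. ?\<phi> y * indicator {..<0} y \<partial>lborel)
        = (\<integral>y. ?\<phi> y * indicator {0<..} y + ?\<phi> y * indicator {..<0} y \<partial>lborel)"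
      by (intro Bochner_Integration.integral_add[symmetric] integrable_real_mult_indicator) auto
    also have "\<dots> \<le> (\<integral>y. ?\<phi> y \<partial>lborel)"
      by (intro integral_mono Bochner_Integration.integrable_add integrable_real_mult_indicator)
         (auto simp: indicator_def)
    finally show ?thesis by simp
  qed
  finally show ?thesis by simp
qed

lemma exp_neg_two_div_sqrt_two_pi_ge: "1 / 20 \<le> exp (- 2) / sqrt (2 * pi)"
proof -
  have "exp 2 = (exp 1)\<^sup>2" by (simp flip: exp_double)
  also have "\<dots> \<le> (272 / 100 :: real)\<^sup>2" using e_less_272 by (intro power_mono) auto
  finally have exp2: "exp (2::real) \<le> (272 / 100)\<^sup>2" .
  have "sqrt (2 * pi) \<le> sqrt ((251 / 100)\<^sup>2)"
    using pi_approx by (subst real_sqrt_le_iff) (simp add: power2_eq_square)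
  then have "sqrt (2 * pi) \<le> 251 / 100" by simp
  then have "exp 2 * sqrt (2 * pi) \<le> (272 / 100)\<^sup>2 * (251 / 100)"
    using exp2 by (intro mult_mono) auto
  then show ?thesis by (simp add: exp_minus field_simps)
qed

lemma integral_std_normal_upper_tail_one_ge:
  "1 / 20 \<le> (\<integral>x. std_normal_density x * indicator {1..} x \<partial>lborel)"
proof -
  have "1 / 20 \<le> (\<integral>x. std_normal_density 2 * indicator {1..2::real} x \<partial>lborel)"
    using exp_neg_two_div_sqrt_two_pi_ge by (simp add: std_normal_density_def)
  also have "\<dots> \<le> (\<integral>x. std_normal_density x * indicator {1..} x \<partial>lborel)"
  proof (rule integral_mono)
    show "integrable lborel (\<lambda>x. std_normal_density x * indicator {1..} x)"
      by (rule integrable_real_mult_indicator) auto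
    fix x :: real
    show "std_normal_density 2 * indicator {1..2} x \<le> std_normal_density x * indicator {1..} x"
    proof (cases "x \<in> {1..2}")
      case True
      then have "x\<^sup>2 \<le> 2\<^sup>2" by (intro power_mono) auto
      then have "std_normal_density 2 \<le> std_normal_density x"
        unfolding std_normal_density_def by (intro mult_left_mono) auto
      then show ?thesis using True by simp
    qed simp
  qed simp
  finally show ?thesis .
qed

lemma gaussian_rv_borel_measurable: "gaussian_rv M Y \<mu> v \<Longrightarrow> Y \<in> borel_measurable M"
  unfolding gaussian_rv_def by (auto dest: distributed_measurable)

lemma gaussian_rv_variance_nonneg: "gaussian_rv M Y \<mu> v \<Longrightarrow> 0 \<le> v"
  unfolding gaussian_rv_def by auto

lemma gaussian_process_on_marginal:
  assumes "gaussian_process_on M Q F m C" "finite Q" "x \<in> Q"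
  shows "gaussian_rv M (\<lambda>w. F w x) (m x) (C x x)"
proof -
  let ?e = "\<lambda>y. if y = x then 1 else 0 :: real"
  have pick: "(\<Sum>y\<in>Q. ?e y * g y) = g x" for g
    using assms(2,3) by (simp add: if_distrib if_distribR cong: if_cong)
  have "gaussian_rv M (\<lambda>w. \<Sum>y\<in>Q. ?e y * F w y) (\<Sum>y\<in>Q. ?e y * m y)
          (\<Sum>y\<in>Q. ?e y * (\<Sum>z\<in>Q. ?e z * C y z))"
    using assms(1)[unfolded gaussian_process_on_def, rule_format, of ?e]
    by (simp add: sum_distrib_left mult.assoc)
  then show ?thesis by (simp only: pick)
qed

context prob_space
begin

lemma prob_distributed_std_normal:
  assumes "distributed M lborel Z std_normal_density" "A \<in> sets borel"
  shows "prob {w\<in>space M. Z w \<in> A} = (\<integral>x. std_normal_density x * indicator A x \<partial>lborel)"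
proof -
  have "(\<integral>x. std_normal_density x * indicator A x \<partial>lborel) = (\<integral>w. indicator A (Z w) \<partial>M)"
    using assms by (intro distributed_integral) auto
  also have "\<dots> = (\<integral>w. indicator {w\<in>space M. Z w \<in> A} w \<partial>M)"
    by (intro Bochner_Integration.integral_cong) (auto simp: indicator_def)
  finally show ?thesis by (simp add: Int_absorb2 subset_iff)
qed

lemma gaussian_rv_standardize:
  assumes "gaussian_rv M Y \<mu> (s\<^sup>2)" "0 < s"
  shows "distributed M lborel (\<lambda>w. (Y w - \<mu>) / s) std_normal_density"
  using assms normal_standard_normal_convert[of s] unfolding gaussian_rv_def by simp

lemma gaussian_rv_AE_eq_mean:
  assumes "gaussian_rv M Y \<mu> 0"
  shows "AE w in M. Y w = \<mu>"
  using assms unfolding gaussian_rv_def by simp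

lemma gaussian_rv_two_sided_tail_le:
  assumes Y: "gaussian_rv M Y \<mu> (s\<^sup>2)" and "0 \<le> s" "0 \<le> a"
  shows "prob {w\<in>space M. a * s < \<bar>Y w - \<mu>\<bar>} \<le> exp (- a\<^sup>2 / 2)"
proof -
  have [measurable]: "Y \<in> borel_measurable M" by (rule gaussian_rv_borel_measurable[OF Y])
  show ?thesis
  proof (cases "s = 0")
    case True
    with Y have "AE w in M. Y w = \<mu>" by (intro gaussian_rv_AE_eq_mean) simp
    with True have "prob {w\<in>space M. a * s < \<bar>Y w - \<mu>\<bar>} = 0"
      by (subst prob_Collect_eq_0) (auto elim!: AE_mp)
    then show ?thesis by simp
  next
    case False
    with assms have s: "0 < s" by simp
    have "{w\<in>space M. a * s < \<bar>Y w - \<mu>\<bar>} = {w\<in>space M. (Y w - \<mu>) / s \<in> {x. a < \<bar>x\<bar>}}"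
      using s by (auto simp: abs_div pos_less_divide_eq)
    also have "prob \<dots> = (\<integral>x. std_normal_density x * indicator {x. a < \<bar>x\<bar>} x \<partial>lborel)"
      by (intro prob_distributed_std_normal gaussian_rv_standardize[OF Y s]) measurable
    also have "\<dots> \<le> exp (- a\<^sup>2 / 2)" by (rule integral_std_normal_two_sided_tail_le) fact
    finally show ?thesis .
  qed
qed

lemma gaussian_rv_upper_tail_ge:
  assumes Y: "gaussian_rv M Y \<mu> (s\<^sup>2)" and "0 \<le> s"
  shows "1 / 20 \<le> prob {w\<in>space M. \<mu> + s \<le> Y w}"
proof -
  have [measurable]: "Y \<in> borel_measurable M" by (rule gaussian_rv_borel_measurable[OF Y])
  show ?thesis
  proof (cases "s = 0")
    case True
    with Y have "AE w in M. Y w = \<mu>" by (intro gaussian_rv_AE_eq_mean) simp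
    with True have "prob {w\<in>space M. \<mu> + s \<le> Y w} = 1"
      by (subst prob_Collect_eq_1) (auto elim!: AE_mp)
    then show ?thesis by simp
  next
    case False
    with assms have s: "0 < s" by simp
    have "{w\<in>space M. \<mu> + s \<le> Y w} = {w\<in>space M. (Y w - \<mu>) / s \<in> {1..}}"
      using s by (auto simp: le_divide_eq)
    also have "prob \<dots> = (\<integral>x. std_normal_density x * indicator {1..} x \<partial>lborel)"
      by (intro prob_distributed_std_normal gaussian_rv_standardize[OF Y s]) measurable
    finally show ?thesis using integral_std_normal_upper_tail_one_ge by simp
  qed
qed

end

lemma rkhs_norm_le_abs_le:
  assumes Q: "finite Q" and psd: "psd_kernel_on Q k" and f: "rkhs_norm_le Q k f B"
    and x: "x \<in> Q" and kxx: "k x x \<le> 1"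
  shows "\<bar>f x\<bar> \<le> B"
proof -
  obtain \<alpha> where f_eq: "\<And>y. y \<in> Q \<Longrightarrow> f y = (\<Sum>z\<in>Q. \<alpha> z * k y z)"
    and norm: "(\<Sum>u\<in>Q. \<Sum>v\<in>Q. \<alpha> u * \<alpha> v * k u v) \<le> B\<^sup>2" and "0 \<le> B"
    using f unfolding rkhs_norm_le_def by blast
  have sym: "\<And>u v. u \<in> Q \<Longrightarrow> v \<in> Q \<Longrightarrow> k u v = k v u"
    and form_nonneg: "\<And>b. 0 \<le> (\<Sum>u\<in>Q. \<Sum>v\<in>Q. b u * b v * k u v)"
    using psd unfolding psd_kernel_on_def by auto
  (* Cauchy-Schwarz for f x = <f, k x>: the kernel form is nonnegative at \<alpha> - f x \<delta>_x. *)
  define c where "c u = (if u = x then f x else 0)" for u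
  have pick: "(\<Sum>u\<in>Q. c u * g u) = f x * g x" for g
    using Q x by (simp add: c_def if_distrib if_distribR cong: if_cong)
  have pick': "(\<Sum>v\<in>Q. g v * c v) = f x * g x" for g
    using pick[of g] by (simp add: mult.commute)
  have f_sym: "(\<Sum>u\<in>Q. \<alpha> u * k u x) = f x"
    using f_eq[OF x] sym x by (auto intro: sum.cong)
  have "(\<Sum>u\<in>Q. \<Sum>v\<in>Q. (\<alpha> u - c u) * (\<alpha> v - c v) * k u v)
      = (\<Sum>u\<in>Q. \<Sum>v\<in>Q. \<alpha> u * \<alpha> v * k u v) - (\<Sum>u\<in>Q. c u * (\<Sum>v\<in>Q. \<alpha> v * k u v))
        - (\<Sum>u\<in>Q. \<alpha> u * (\<Sum>v\<in>Q. k u v * c v)) + (\<Sum>u\<in>Q. c u * (\<Sum>v\<in>Q. k u v * c v))"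
    by (simp add: sum_distrib_left sum_subtractf sum.distrib algebra_simps)
  also have "\<dots> = (\<Sum>u\<in>Q. \<Sum>v\<in>Q. \<alpha> u * \<alpha> v * k u v) - 2 * (f x)\<^sup>2 + (f x)\<^sup>2 * k x x"
  proof -
    have "(\<Sum>u\<in>Q. \<alpha> u * (f x * k u x)) = f x * (\<Sum>u\<in>Q. \<alpha> u * k u x)"
      by (simp add: sum_distrib_left mult.left_commute)
    also have "\<dots> = f x * f x" by (simp only: f_sym)
    finally have "(\<Sum>u\<in>Q. \<alpha> u * (f x * k u x)) = f x * f x" .
    then show ?thesis
      using f_eq[OF x, symmetric] by (simp add: pick pick' power2_eq_square)
  qed
  finally have "0 \<le> (\<Sum>u\<in>Q. \<Sum>v\<in>Q. \<alpha> u * \<alpha> v * k u v) - 2 * (f x)\<^sup>2 + (f x)\<^sup>2 * k x x"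
    using form_nonneg[of "\<lambda>u. \<alpha> u - c u"] by simp
  moreover have "(f x)\<^sup>2 * k x x \<le> (f x)\<^sup>2" using kxx by (simp add: mult_left_le)
  ultimately have "(f x)\<^sup>2 \<le> B\<^sup>2" using norm by linarith
  with \<open>0 \<le> B\<close> show ?thesis using abs_le_square_iff[of "f x" B] by simp
qed

(* One round of GP Thompson sampling: F is the posterior sample f_t, X the selected point,
   s = \<nu> \<sigma> the sampling scale, and mean_close is the event E^f. *)
locale gp_thompson_step = prob_space M
  for M :: "'w measure"
  and Q :: "'a set" and F :: "'w \<Rightarrow> 'a \<Rightarrow> real" and X :: "'w \<Rightarrow> 'a"
  and \<mu> s f :: "'a \<Rightarrow> real" and \<rho> B :: real and xstar :: 'a +
  assumes finite_Q: "finite Q"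
    and F_gaussian: "x \<in> Q \<Longrightarrow> gaussian_rv M (\<lambda>w. F w x) (\<mu> x) ((s x)\<^sup>2)"
    and X_measurable: "X \<in> M \<rightarrow>\<^sub>M count_space UNIV"
    and X_in_Q: "w \<in> space M \<Longrightarrow> X w \<in> Q"
    and X_argmax: "w \<in> space M \<Longrightarrow> x \<in> Q \<Longrightarrow> F w x \<le> F w (X w)"
    and mean_close: "x \<in> Q \<Longrightarrow> \<bar>\<mu> x - \<rho> * f x\<bar> \<le> s x"
    and rho_pos: "0 < \<rho>"
    and f_bounded: "x \<in> Q \<Longrightarrow> \<bar>f x\<bar> \<le> B"
    and xstar_in_Q: "xstar \<in> Q"
    and xstar_max: "x \<in> Q \<Longrightarrow> f x \<le> f xstar"
begin

definition deviation :: "real \<Rightarrow> 'w set" where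
  "deviation b = (\<Union>x\<in>Q. {w\<in>space M. b * s x < \<bar>F w x - \<mu> x\<bar>})"

definition saturated :: "real \<Rightarrow> 'a set" where
  "saturated c = {x\<in>Q. 2 * c * s x < \<rho> * (f xstar - f x)}"

definition confidence_radius :: "nat \<Rightarrow> real" where
  "confidence_radius t = sqrt (2 * ln (real (card Q) * (real t)\<^sup>2))"

lemma s_nonneg: "x \<in> Q \<Longrightarrow> 0 \<le> s x"
  using mean_close[of x] by linarith

lemma F_borel_measurable [measurable]: "x \<in> Q \<Longrightarrow> (\<lambda>w. F w x) \<in> borel_measurable M"
  using F_gaussian by (rule gaussian_rv_borel_measurable)

lemma comp_X_borel_measurable [measurable]: "(\<lambda>w. g (X w)) \<in> borel_measurable M"
  for g :: "'a \<Rightarrow> real"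
  using X_measurable by (rule measurable_compose) simp

lemma deviation_at_in_events: "x \<in> Q \<Longrightarrow> {w\<in>space M. b * s x < \<bar>F w x - \<mu> x\<bar>} \<in> events"
  by measurable

lemma deviation_in_events: "deviation b \<in> events"
  unfolding deviation_def using finite_Q deviation_at_in_events by blast

lemma X_preimage_in_events: "{w\<in>space M. X w \<in> U} \<in> events"
  using measurable_sets[OF X_measurable, of U] by (simp add: Int_def conj_commute)

lemma integrable_comp_X: "integrable M (\<lambda>w. g (X w))"
  for g :: "'a \<Rightarrow> real"
proof (rule integrable_const_bound)
  show "AE w in M. norm (g (X w)) \<le> (\<Sum>x\<in>Q. \<bar>g x\<bar>)"
    using finite_Q X_in_Q member_le_sum[of _ Q "\<lambda>x. \<bar>g x\<bar>"] by (intro AE_I2) simp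
qed simp

lemma prob_deviation_le:
  assumes "0 \<le> b"
  shows "prob (deviation b) \<le> card Q * exp (- b\<^sup>2 / 2)"
proof -
  have "prob (deviation b) \<le> (\<Sum>x\<in>Q. prob {w\<in>space M. b * s x < \<bar>F w x - \<mu> x\<bar>})"
    unfolding deviation_def using finite_Q deviation_at_in_events
    by (intro finite_measure_subadditive_finite) auto
  also have "\<dots> \<le> (\<Sum>x\<in>Q. exp (- b\<^sup>2 / 2))"
    using F_gaussian s_nonneg assms by (intro sum_mono gaussian_rv_two_sided_tail_le) auto
  finally show ?thesis by simp
qed

lemma not_saturated_if_sample_high:
  assumes "0 \<le> a" "w \<in> space M" "w \<notin> deviation (1 + 2 * a)"
    and "\<mu> xstar + s xstar \<le> F w xstar"
  shows "X w \<notin> saturated (1 + a)"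
proof
  assume sat: "X w \<in> saturated (1 + a)"
  have "F w (X w) \<le> \<mu> (X w) + (1 + 2 * a) * s (X w)"
    using assms(2,3) X_in_Q unfolding deviation_def by fastforce
  also have "\<dots> \<le> \<rho> * f (X w) + 2 * (1 + a) * s (X w)"
    using mean_close[OF X_in_Q[OF assms(2)]] by (simp add: algebra_simps)
  also have "\<dots> < \<rho> * f xstar"
    using sat unfolding saturated_def by (simp add: algebra_simps)
  also have "\<dots> \<le> \<mu> xstar + s xstar"
    using mean_close[OF xstar_in_Q] by linarith
  also have "\<dots> \<le> F w (X w)"
    using assms(4) X_argmax[OF assms(2) xstar_in_Q] by linarith
  finally show False by simp
qed

lemma regret_le_if_no_deviation:
  assumes "w \<in> space M" "w \<notin> deviation a" "x \<in> Q - saturated (1 + a)"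
  shows "\<rho> * (f xstar - f (X w)) \<le> (1 + a) * (3 * s x + s (X w))"
proof -
  have x: "x \<in> Q" and "\<rho> * (f xstar - f x) \<le> 2 * (1 + a) * s x"
    using assms(3) unfolding saturated_def by auto
  moreover have "\<rho> * f x \<le> F w x + (1 + a) * s x"
    using mean_close[OF x] assms(1,2) x unfolding deviation_def by (force simp: algebra_simps)
  moreover have "F w x \<le> F w (X w)" using X_argmax[OF assms(1) x] .
  moreover have "F w (X w) \<le> \<rho> * f (X w) + (1 + a) * s (X w)"
    using mean_close[OF X_in_Q[OF assms(1)]] assms(1,2) X_in_Q unfolding deviation_def
    by (force simp: algebra_simps)
  ultimately show ?thesis by (simp add: algebra_simps)
qed

lemma expectation_scale_nonneg: "0 \<le> expectation (\<lambda>w. s (X w))"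
  using X_in_Q s_nonneg by (intro integral_nonneg_AE AE_I2) auto

lemma expectation_scale_ge:
  assumes "x \<in> U" "\<And>y. y \<in> U \<Longrightarrow> s x \<le> s y" "U \<subseteq> Q"
  shows "s x * prob {w\<in>space M. X w \<in> U} \<le> expectation (\<lambda>w. s (X w))"
proof -
  have "s x * prob {w\<in>space M. X w \<in> U} = expectation (\<lambda>w. s x * indicator {w\<in>space M. X w \<in> U} w)"
    using X_preimage_in_events by simp
  also have "\<dots> \<le> expectation (\<lambda>w. s (X w))"
    using assms s_nonneg X_in_Q X_preimage_in_events
    by (intro integral_mono integrable_comp_X integrable_real_mult_indicator)
       (auto simp: indicator_def)
  finally show ?thesis .
qed

lemma card_Q_ge_1: "1 \<le> card Q"
  using finite_Q xstar_in_Q by (simp add: Suc_le_eq card_gt_0_iff) blast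

lemma card_Q_mult_sq_ge_1: "1 \<le> t \<Longrightarrow> 1 \<le> real (card Q) * (real t)\<^sup>2"
  using card_Q_ge_1 mult_mono[of 1 "real (card Q)" 1 "(real t)\<^sup>2"] by (simp add: one_le_power)

lemma confidence_radius_nonneg: "1 \<le> t \<Longrightarrow> 0 \<le> confidence_radius t"
  using card_Q_mult_sq_ge_1 by (simp add: confidence_radius_def)

lemma exp_confidence_radius:
  assumes "1 \<le> t"
  shows "exp (- (confidence_radius t)\<^sup>2 / 2) = 1 / (real (card Q) * (real t)\<^sup>2)"
  using card_Q_mult_sq_ge_1[OF assms]
  by (simp add: confidence_radius_def exp_minus inverse_eq_divide)

lemma prob_deviation_radius_le:
  assumes "1 \<le> t"
  shows "prob (deviation (confidence_radius t)) \<le> 1 / (real t)\<^sup>2"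
  using prob_deviation_le[OF confidence_radius_nonneg[OF assms]] exp_confidence_radius[OF assms]
    card_Q_ge_1
  by simp

lemma prob_deviation_double_radius_le:
  assumes "2 \<le> t"
  shows "prob (deviation (1 + 2 * confidence_radius t)) \<le> 1 / 64"
proof -
  let ?r = "confidence_radius t" and ?N = "real (card Q) * (real t)\<^sup>2"
  have "(2::real)\<^sup>2 \<le> (real t)\<^sup>2" using assms by (intro power_mono) auto
  then have N: "4 \<le> ?N" using card_Q_ge_1 mult_mono[of 1 "real (card Q)" 4 "(real t)\<^sup>2"] by simp
  have r: "0 \<le> ?r" using assms by (intro confidence_radius_nonneg) simp
  have "prob (deviation (1 + 2 * ?r)) \<le> card Q * exp (- (1 + 2 * ?r)\<^sup>2 / 2)"
    using r by (intro prob_deviation_le) simp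
  also have "\<dots> \<le> card Q * exp (real 4 * (- ?r\<^sup>2 / 2))"
    using r by (intro mult_left_mono) (simp_all add: power2_eq_square algebra_simps)
  also have "exp (real 4 * (- ?r\<^sup>2 / 2)) = 1 / ?N ^ 4"
    using assms by (simp only: exp_of_nat_mult exp_confidence_radius) (simp add: power_one_over)
  also have "card Q * (1 / ?N ^ 4) \<le> ?N * (1 / ?N ^ 4)"
    using assms mult_left_mono[of 1 "(real t)\<^sup>2" "real (card Q)"]
    by (intro mult_right_mono) (auto simp: one_le_power)
  also have "\<dots> = 1 / ?N ^ 3" using N by (simp add: power_eq_if)
  also have "\<dots> \<le> 1 / 4 ^ 3" using N by (intro divide_left_mono power_mono) auto
  finally show ?thesis by simp
qed

lemma prob_not_saturated_ge:
  assumes "2 \<le> t"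
  shows "1 / 32 \<le> prob {w\<in>space M. X w \<in> Q - saturated (1 + confidence_radius t)}"
proof -
  let ?r = "confidence_radius t"
  let ?high = "{w\<in>space M. \<mu> xstar + s xstar \<le> F w xstar}"
  let ?unsat = "{w\<in>space M. X w \<in> Q - saturated (1 + ?r)}"
  have r: "0 \<le> ?r" using assms by (intro confidence_radius_nonneg) simp
  have "?high \<subseteq> ?unsat \<union> deviation (1 + 2 * ?r)"
    using not_saturated_if_sample_high[OF r] X_in_Q by blast
  then have "prob ?high \<le> prob (?unsat \<union> deviation (1 + 2 * ?r))"
    using X_preimage_in_events deviation_in_events by (intro finite_measure_mono) auto
  also have "\<dots> \<le> prob ?unsat + prob (deviation (1 + 2 * ?r))"
    using X_preimage_in_events deviation_in_events
    by (intro measure_subadditive) (auto simp: emeasure_eq_measure)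
  finally have "prob ?high \<le> prob ?unsat + prob (deviation (1 + 2 * ?r))" .
  moreover have "1 / 20 \<le> prob ?high"
    using F_gaussian[OF xstar_in_Q] s_nonneg[OF xstar_in_Q] by (rule gaussian_rv_upper_tail_ge)
  ultimately show ?thesis using prob_deviation_double_radius_le[OF assms] by linarith
qed

lemma regret_le_two_B:
  assumes "w \<in> space M"
  shows "f xstar - f (X w) \<le> 2 * B"
  using f_bounded[OF xstar_in_Q] f_bounded[OF X_in_Q[OF assms]] by (simp add: abs_le_iff)

lemma regret_le_pointwise:
  assumes "w \<in> space M" "x \<in> Q - saturated (1 + a)" "0 \<le> a"
  shows "f xstar - f (X w) \<le> (1 + a) / \<rho> * (3 * s x + s (X w)) + 2 * B * indicator (deviation a) w"
proof (cases "w \<in> deviation a")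
  case True
  have "f xstar - f (X w) \<le> 2 * B" using regret_le_two_B[OF assms(1)] .
  moreover have "0 \<le> (1 + a) / \<rho> * (3 * s x + s (X w))"
    using assms rho_pos s_nonneg X_in_Q by simp
  ultimately show ?thesis using True by simp
next
  case False
  then show ?thesis
    using regret_le_if_no_deviation[OF assms(1) False assms(2)] rho_pos
    by (simp add: field_simps)
qed

lemma expected_regret_le_unsaturated:
  assumes "x \<in> Q - saturated (1 + a)" "0 \<le> a"
  shows "expectation (\<lambda>w. f xstar - f (X w))
    \<le> (1 + a) / \<rho> * (3 * s x + expectation (\<lambda>w. s (X w))) + 2 * B * prob (deviation a)"
proof -
  let ?g = "\<lambda>y. (1 + a) / \<rho> * (3 * s x + s y)"
  have "expectation (\<lambda>w. f xstar - f (X w))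
      \<le> expectation (\<lambda>w. ?g (X w) + 2 * B * indicator (deviation a) w)"
    using regret_le_pointwise[OF _ assms] deviation_in_events
    by (intro integral_mono integrable_comp_X[of "\<lambda>y. f xstar - f y"] Bochner_Integration.integrable_add
        integrable_real_mult_indicator integrable_comp_X[of ?g]) auto
  also have "\<dots> = expectation (\<lambda>w. ?g (X w)) + expectation (\<lambda>w. 2 * B * indicator (deviation a) w)"
    using deviation_in_events
    by (intro Bochner_Integration.integral_add integrable_real_mult_indicator integrable_comp_X) auto
  also have "\<dots> = (1 + a) / \<rho> * (3 * s x + expectation (\<lambda>w. s (X w))) + 2 * B * prob (deviation a)"
    using deviation_in_events integrable_comp_X[of s] prob_space
    by (simp add: Bochner_Integration.integral_add)
  finally show ?thesis .
qed

theorem expected_regret_le: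
  assumes "1 \<le> t"
  shows "expectation (\<lambda>w. f xstar - f (X w))
    \<le> 97 * (1 + confidence_radius t) / \<rho> * expectation (\<lambda>w. s (X w)) + 2 * B / (real t)\<^sup>2"
proof (cases "t = 1")
  case True
  have "expectation (\<lambda>w. f xstar - f (X w)) \<le> expectation (\<lambda>w. 2 * B)"
    using regret_le_two_B by (intro integral_mono integrable_comp_X[of "\<lambda>x. f xstar - f x"]) auto
  moreover have "0 \<le> 97 * (1 + confidence_radius t) / \<rho> * expectation (\<lambda>w. s (X w))"
    using assms confidence_radius_nonneg rho_pos expectation_scale_nonneg by simp
  ultimately show ?thesis using True prob_space by simp
next
  case False
  let ?r = "confidence_radius t"
  let ?U = "Q - saturated (1 + ?r)"
  let ?E = "expectation (\<lambda>w. s (X w))"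
  have r: "0 \<le> ?r" using assms by (rule confidence_radius_nonneg)
  have "xstar \<in> ?U"
    using xstar_in_Q s_nonneg[OF xstar_in_Q] r unfolding saturated_def by (auto simp: mult_less_0_iff)
  moreover have "finite ?U" using finite_Q by simp
  ultimately obtain x where x: "x \<in> ?U" and x_min: "\<And>y. y \<in> ?U \<Longrightarrow> s x \<le> s y"
    using ex_is_arg_min_if_finite[of ?U s] unfolding is_arg_min_linorder by blast
  have "s x * (1 / 32) \<le> ?E"
    using expectation_scale_ge[OF x x_min] prob_not_saturated_ge[of t] assms False
      s_nonneg[of x] x mult_left_mono[of "1 / 32" _ "s x"]
    by fastforce
  then have sx: "s x \<le> 32 * ?E" by simp
  have "expectation (\<lambda>w. f xstar - f (X w))
      \<le> (1 + ?r) / \<rho> * (3 * s x + ?E) + 2 * B * prob (deviation ?r)"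
    using x r by (rule expected_regret_le_unsaturated)
  also have "\<dots> \<le> (1 + ?r) / \<rho> * (97 * ?E) + 2 * B * (1 / (real t)\<^sup>2)"
    using sx r rho_pos prob_deviation_radius_le[OF assms] f_bounded[OF xstar_in_Q]
    by (intro add_mono mult_left_mono) auto
  finally show ?thesis by (simp add: algebra_simps)
qed

end

lemma exp_one_sqrt_pi_ge: "97 \<le> 44 * exp 1 * sqrt pi"
proof -
  have "(17 / 10)\<^sup>2 \<le> pi" using pi_approx by (simp add: power2_eq_square)
  then have "17 / 10 \<le> sqrt pi" by (rule real_le_rsqrt)
  moreover have "2 \<le> exp (1::real)" using exp_ge_add_one_self[of 1] by simp
  ultimately have "2 * (17 / 10) \<le> exp 1 * sqrt pi" by (intro mult_mono) auto
  then show ?thesis by simp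
qed

theorem lemma5:
  fixes Q :: "(real ^ 'n) set"
    and k :: "real ^ 'n \<Rightarrow> real ^ 'n \<Rightarrow> real"
    and f :: "real ^ 'n \<Rightarrow> real"
    and xstar :: "real ^ 'n"
    and Bf By R lam \<delta> :: real
    and D :: "nat pmf"
    and m t :: nat
    and xs :: "nat \<Rightarrow> real ^ 'n" and ys :: "nat \<Rightarrow> real" and ds :: "nat \<Rightarrow> nat"
    and M :: "'w measure"
    and Ft :: "'w \<Rightarrow> real ^ 'n \<Rightarrow> real"
    and X :: "'w \<Rightarrow> real ^ 'n"
  defines "\<rho> \<equiv> measure_pmf.prob D {..m}"
    and "yt \<equiv> censored ys ds m t"
  defines "\<mu> \<equiv> post_mean k lam xs (t - 1) yt"
    and "\<sigma> \<equiv> post_sd k lam xs (t - 1)"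
  defines "\<beta> \<equiv> Bf + (R + By) * sqrt (2 * (info_gain Q k lam (t - 1) + 1 + ln (4 / \<delta>)))"
  defines "\<nu> \<equiv> By * (\<Sum>s | 1 \<le> s \<and> s \<le> t - 1 \<and> t \<le> s + m. \<sigma> (xs s)) + \<beta>"
  defines "c \<equiv> \<nu> * (1 + sqrt (2 * ln (real (card Q) * (real t)\<^sup>2)))"
    and "p \<equiv> 1 / (4 * exp 1 * sqrt pi)"
  assumes Q: "finite Q" "Q \<noteq> {}"
    and k_psd: "psd_kernel_on Q k"
    and k_le1: "\<forall>x\<in>Q. \<forall>y\<in>Q. k x y \<le> 1"
    and f_rkhs: "rkhs_norm_le Q k f Bf"
    and xstar: "xstar \<in> Q" "\<forall>x\<in>Q. f x \<le> f xstar"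
    and params: "lam > 0" "R \<ge> 0" "By \<ge> 0" "0 < \<delta>" "\<delta> < 1" "m \<ge> 1" "t \<ge> 1"
    and rho_pos: "\<rho> > 0"
    and hist: "\<forall>s\<in>{1..t-1}. xs s \<in> Q \<and> \<bar>ys s\<bar> \<le> By"
    and Ef: "\<forall>x\<in>Q. \<bar>\<mu> x - \<rho> * f x\<bar> \<le> \<nu> * \<sigma> x"
    and M: "prob_space M"
    and GP: "gaussian_process_on M Q Ft \<mu> (\<lambda>x x'. \<nu>\<^sup>2 * post_cov k lam xs (t - 1) x x')"
    and X_meas: "X \<in> M \<rightarrow>\<^sub>M count_space UNIV"
    and X_argmax: "\<forall>w\<in>space M. X w \<in> Q \<and> (\<forall>x\<in>Q. Ft w x \<le> Ft w (X w))"
  shows "prob_space.expectation M (\<lambda>w. f xstar - f (X w))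
           \<le> 11 * c / (\<rho> * p) * prob_space.expectation M (\<lambda>w. \<sigma> (X w)) + 2 * Bf / (real t)\<^sup>2"
proof -
  interpret prob_space M by (rule M)
  have variance_eq: "\<nu>\<^sup>2 * post_cov k lam xs (t - 1) x x = (\<nu> * \<sigma> x)\<^sup>2" if "x \<in> Q" for x
  proof (cases "\<nu> = 0")
    case False
    have "0 \<le> \<nu>\<^sup>2 * post_cov k lam xs (t - 1) x x"
      using gaussian_process_on_marginal[OF GP Q(1) that] by (rule gaussian_rv_variance_nonneg)
    with False have "0 \<le> post_cov k lam xs (t - 1) x x" by (simp add: zero_le_mult_iff)
    then show ?thesis by (simp add: \<sigma>_def post_sd_def power_mult_distrib)
  qed simp
  interpret gp_thompson_step M Q Ft X \<mu> "\<lambda>x. \<nu> * \<sigma> x" f \<rho> Bf xstar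
    using Q X_meas X_argmax Ef rho_pos xstar k_le1 rkhs_norm_le_abs_le[OF Q(1) k_psd f_rkhs]
      gaussian_process_on_marginal[OF GP Q(1)] variance_eq
    by unfold_locales auto
  let ?C = "(1 + confidence_radius t) / \<rho> * expectation (\<lambda>w. \<nu> * \<sigma> (X w))"
  have "expectation (\<lambda>w. f xstar - f (X w)) \<le> 97 * ?C + 2 * Bf / (real t)\<^sup>2"
    using expected_regret_le[OF params(7)] by (simp add: algebra_simps)
  also have "97 * ?C \<le> 44 * exp 1 * sqrt pi * ?C"
    using exp_one_sqrt_pi_ge confidence_radius_nonneg[of t] params(7) rho_pos expectation_scale_nonneg
    by (intro mult_right_mono) auto
  also have "44 * exp 1 * sqrt pi * ?C = 11 * c / (\<rho> * p) * expectation (\<lambda>w. \<sigma> (X w))"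
    by (simp add: c_def p_def confidence_radius_def field_simps)
  finally show ?thesis by simp
qed

end
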